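(* Let $F$ be a finite non-abelian group and let $L=F\wr\mathbb{Z}=\left(\bigoplus_{i\in\mathbb{Z}}F\right)\rtimes\mathbb{Z}$, where $\mathbb{Z}$ acts by shifting coordinates. Then $L$ does not embed (as a subgroup) in $\mathrm{IET}$.
   Context: $\mathrm{IET}$ denotes the group of interval exchange transformations of $[0,1)$: bijections of $[0,1)$ that are orientation-preserving piecewise isometries (piecewise translations), left-continuous, with finitely many discontinuity points. *)

theory Defs
  imports "HOL-Analysis.Analysis" "HOL-Algebra.Algebra"
begin

text \<open>Interval exchange transformations of [0,1): bijections of [0,1) that are
  piecewise translations with finitely many pieces (breakpoints a 0 = 0 < ... < a n = 1),
  left-continuous on (0,1). As functions on the reals, they are normalized to be
  the identity outside [0,1), so that the group operation is composition with unit id.\<close>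
definition iet_map :: "(real \<Rightarrow> real) \<Rightarrow> bool" where
  "iet_map f \<longleftrightarrow>
     bij_betw f {0..<1} {0..<1} \<and>
     (\<forall>x. x \<notin> {0..<1} \<longrightarrow> f x = x) \<and>
     (\<exists>(n::nat) (a::nat \<Rightarrow> real) (t::nat \<Rightarrow> real).
        a 0 = 0 \<and> a n = 1 \<and> (\<forall>i<n. a i < a (Suc i)) \<and>
        (\<forall>i<n. \<forall>x\<in>{a i<..<a (Suc i)}. f x = x + t i)) \<and>
     (\<forall>x\<in>{0<..<1}. (f \<longlongrightarrow> f x) (at_left x))"

definition IET :: "(real \<Rightarrow> real) monoid" where
  "IET = \<lparr>carrier = {f. iet_map f}, mult = (\<circ>), one = id\<rparr>"

definition wreath_Z :: "('a, 'b) monoid_scheme \<Rightarrow> ((int \<Rightarrow> 'a) \<times> int) monoid" where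
  "wreath_Z F = \<lparr>carrier = {(g, m). (\<forall>i. g i \<in> carrier F) \<and> finite {i. g i \<noteq> \<one>\<^bsub>F\<^esub>}},
     mult = (\<lambda>(g, m) (h, n). (\<lambda>i. g i \<otimes>\<^bsub>F\<^esub> h (i - m), m + n)),
     one = (\<lambda>i. \<one>\<^bsub>F\<^esub>, 0)\<rparr>"

end

theory Submission
  imports Defs "HOL-Real_Asymp.Real_Asymp"
begin

(* Suppose \<phi> embeds F wr Z into IET and a, b \<in> F do not commute. Write c_m = base (single m c)
   for the image of the element c placed at coordinate m, and T^m = shift m for the image of m \<in> Z,
   so that c_m = T^m c_0 T^-m. The commutator of a_0 and b_0 is a nontrivial IET, hence moves
   every point of some interval I, and so a_m and b_m fail to commute at every point of T^m I.
   Since IETs preserve Lebesgue measure, some point x lies in T^m I for more than j^2 of the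
   indices m < N, where N is about j^2 / |I|.

   Consider the orbits of x under the finite groups supported on sets E of coordinates. The
   elements at a new coordinate commute with the old group, so adding a coordinate either leaves
   the orbit unchanged or at least doubles it; and an orbit that has stopped growing is doubled
   again by every further coordinate at which a_m and b_m do not commute at x. Hence the orbit of
   x under the coordinates found above has at least 2^j points. On the other hand, an element
   supported on [0, N) is a word of length 3N in the c_0 and T, T^-1, each of which displaces
   points by one of finitely many, say d, amounts; so the orbit has at most (3N + 1)^d points,
   a polynomial in j that is less than 2^j for large j. *)

section \<open>Interval exchange maps\<close>

lemma ex_index_between:
  fixes a :: "nat \<Rightarrow> 'a::linorder"
  assumes "a 0 \<le> y" and "y < a n"
  shows "\<exists>i<n. a i \<le> y \<and> y < a (Suc i)"
  using assms(2)
proof (induction n)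
  case 0
  then show ?case using assms(1) by simp
next
  case (Suc n)
  show ?case
  proof (cases "y < a n")
    case True
    then show ?thesis using Suc.IH less_Suc_eq by blast
  next
    case False
    then show ?thesis using Suc.prems by (intro exI[of _ n]) auto
  qed
qed

lemma iet_map_piecesE:
  assumes "iet_map f"
  obtains n a t where "a 0 = 0" and "a n = 1"
    and "\<And>i j. i \<le> j \<Longrightarrow> j \<le> n \<Longrightarrow> a i \<le> a j" and "\<And>i. i < n \<Longrightarrow> a i < a (Suc i)"
    and "\<And>i x. i < n \<Longrightarrow> x \<in> {a i<..<a (Suc i)} \<Longrightarrow> f x = x + t i"
    and "\<And>y. y \<in> {0..<1} \<Longrightarrow> \<exists>i<n. a i \<le> y \<and> y < a (Suc i)"
proof -
  obtain n a t where a0: "a 0 = 0" and an: "a n = 1" and inc: "\<forall>i<n. a i < a (Suc i)"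
    and pieces: "\<forall>i<n. \<forall>x\<in>{a i<..<a (Suc i)}. f x = x + t i"
    using assms unfolding iet_map_def by blast
  have "a i \<le> a j" if "i \<le> j" "j \<le> n" for i j
    using that inc by (auto intro: lift_Suc_mono_le_ivl[of "{..<n}", OF less_imp_le])
  moreover have "\<exists>i<n. a i \<le> y \<and> y < a (Suc i)" if "y \<in> {0..<1}" for y
    using that a0 an by (intro ex_index_between) auto
  ultimately show thesis
    using that a0 an inc pieces by blast
qed

lemma iet_map_inj:
  assumes "iet_map f"
  shows "inj f"
proof (rule injI)
  fix x y assume eq: "f x = f y"
  have bij: "bij_betw f {0..<1} {0..<1}" and outside: "\<And>x. x \<notin> {0..<1} \<Longrightarrow> f x = x"
    using assms unfolding iet_map_def by auto
  have maps: "f z \<in> {0..<1}" if "z \<in> {0..<1}" for z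
    using bij bij_betwE that by blast
  show "x = y"
  proof (cases "x \<in> {0..<1}"; cases "y \<in> {0..<1}")
    assume "x \<in> {0..<1}" "y \<in> {0..<1}"
    then show ?thesis using eq bij by (metis bij_betw_imp_inj_on inj_onD)
  qed (use eq maps outside in metis)+
qed

lemma iet_map_eq_id_if_fixes_interior:
  assumes "iet_map f" and fixes_interior: "\<And>y. y \<in> {0<..<1} \<Longrightarrow> f y = y"
  shows "f = id"
proof
  fix y
  have outside: "\<And>x. x \<notin> {0..<1} \<Longrightarrow> f x = x" and bij: "bij_betw f {0..<1} {0..<1}"
    using assms(1) unfolding iet_map_def by auto
  have "f 0 = 0"
  proof (rule ccontr)
    assume "f 0 \<noteq> 0"
    moreover have "f 0 \<in> {0..<1}"
      using bij bij_betwE by fastforce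
    ultimately have "f (f 0) = f 0"
      using fixes_interior by simp
    then show False
      using \<open>f 0 \<noteq> 0\<close> iet_map_inj[OF assms(1)] by (auto dest: injD)
  qed
  then show "f y = id y"
    using outside fixes_interior by (cases "y = 0"; cases "y \<in> {0<..<1}") auto
qed

lemma finite_range_iet_map_displacement:
  assumes "iet_map f"
  shows "finite (range (\<lambda>y. f y - y))"
proof -
  obtain n a t where pieces: "\<And>i x. i < n \<Longrightarrow> x \<in> {a i<..<a (Suc i)} \<Longrightarrow> f x = x + t i"
    and cover: "\<And>y. y \<in> {0..<1} \<Longrightarrow> \<exists>i<n. a i \<le> y \<and> y < a (Suc i)"
    using iet_map_piecesE[OF assms] by metis
  have outside: "\<And>x. x \<notin> {0..<1} \<Longrightarrow> f x = x"
    using assms unfolding iet_map_def by auto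
  have "f y - y \<in> insert 0 (t ` {..<n} \<union> (\<lambda>i. f (a i) - a i) ` {..<n})" for y
  proof (cases "y \<in> {0..<1}")
    case True
    then obtain i where i: "i < n" "a i \<le> y" "y < a (Suc i)"
      using cover by blast
    then show ?thesis
      using pieces[of i y] by (cases "a i = y") auto
  qed (simp add: outside)
  then have "range (\<lambda>y. f y - y) \<subseteq> insert 0 (t ` {..<n} \<union> (\<lambda>i. f (a i) - a i) ` {..<n})"
    by blast
  then show ?thesis by (rule finite_subset) auto
qed

lemma left_continuous_fixed_point:
  fixes f :: "real \<Rightarrow> real"
  assumes "(f \<longlongrightarrow> f y) (at_left y)" and "l < y" and "\<And>z. z \<in> {l<..<y} \<Longrightarrow> f z = z"
  shows "f y = y"
proof -
  have "\<forall>\<^sub>F z in at_left y. z \<in> {l<..<y}"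
    by (rule eventually_at_left_real[OF assms(2)])
  then have "\<forall>\<^sub>F z in at_left y. z = f z"
    by (rule eventually_mono) (simp add: assms(3))
  then have "(f \<longlongrightarrow> y) (at_left y)"
    by (rule Lim_transform_eventually[OF tendsto_ident_at])
  then show ?thesis
    using assms(1) tendsto_unique[OF trivial_limit_at_left_real] by blast
qed

lemma iet_map_eq_id_if_fixes_cofinite:
  assumes "iet_map f" and "finite S" and fixed: "\<And>y. y \<in> {0<..<1} \<Longrightarrow> y \<notin> S \<Longrightarrow> f y = y"
  shows "f = id"
proof (rule iet_map_eq_id_if_fixes_interior[OF assms(1)])
  fix y :: real assume y: "y \<in> {0<..<1}"
  define l where "l = Max (insert 0 {s \<in> S. s < y})"
  have finite: "finite (insert 0 {s \<in> S. s < y})"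
    using assms(2) by simp
  show "f y = y"
  proof (rule left_continuous_fixed_point)
    show "(f \<longlongrightarrow> f y) (at_left y)"
      using assms(1) y unfolding iet_map_def by blast
    show "l < y"
      using finite y by (simp add: l_def)
    show "f z = z" if z: "z \<in> {l<..<y}" for z
    proof (rule fixed)
      show "z \<in> {0<..<1}"
        using z y Max_ge[OF finite, of 0] by (auto simp: l_def)
      show "z \<notin> S"
        using z Max_ge[OF finite, of z] by (auto simp: l_def)
    qed
  qed
qed

lemma iet_map_moves_interval:
  assumes "iet_map f" and "f \<noteq> id"
  shows "\<exists>p q. 0 \<le> p \<and> p < q \<and> q \<le> 1 \<and> (\<forall>y\<in>{p<..<q}. f y \<noteq> y)"
proof (rule ccontr)
  assume no_interval: "\<not> ?thesis"
  obtain n a t where a0: "a 0 = 0" and an: "a n = 1"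
    and mono: "\<And>i j. i \<le> j \<Longrightarrow> j \<le> n \<Longrightarrow> a i \<le> a j" and inc: "\<And>i. i < n \<Longrightarrow> a i < a (Suc i)"
    and pieces: "\<And>i x. i < n \<Longrightarrow> x \<in> {a i<..<a (Suc i)} \<Longrightarrow> f x = x + t i"
    and cover: "\<And>y. y \<in> {0..<1} \<Longrightarrow> \<exists>i<n. a i \<le> y \<and> y < a (Suc i)"
    using iet_map_piecesE[OF assms(1)] by metis
  have fixes_pieces: "f y = y" if i: "i < n" and y: "y \<in> {a i<..<a (Suc i)}" for i y
  proof (rule ccontr)
    assume "f y \<noteq> y"
    then have "\<forall>z\<in>{a i<..<a (Suc i)}. f z \<noteq> z"
      using pieces i y by auto
    moreover have "0 \<le> a i" and "a i < a (Suc i)" and "a (Suc i) \<le> 1"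
      using mono[of 0 i] inc mono[of "Suc i" n] a0 an i by simp_all
    ultimately show False
      using no_interval by blast
  qed
  have "f y = y" if y: "y \<in> {0<..<1}" and not_breakpoint: "y \<notin> a ` {..<n}" for y
  proof -
    obtain i where "i < n" "a i \<le> y" "y < a (Suc i)"
      using cover[of y] y by auto
    moreover have "a i \<noteq> y"
      using not_breakpoint \<open>i < n\<close> by blast
    ultimately show ?thesis
      using fixes_pieces by simp
  qed
  then show False
    using iet_map_eq_id_if_fixes_cofinite[OF assms(1), of "a ` {..<n}"] assms(2) by blast
qed

lemma emeasure_lborel_Ioo_unconditional:
  "emeasure lborel {l<..<u::real} = ennreal (u - l)" \<comment> \<open>both sides are 0 if u < l\<close>
  by (cases "l \<le> u") (simp_all add: ennreal_neg)

lemma emeasure_Ioo_le_sum_translates: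
  fixes a t :: "nat \<Rightarrow> real"
  assumes "finite Z" and "p \<le> q"
    and cover: "\<And>y. y \<in> {p<..<q} \<Longrightarrow> y \<notin> Z \<Longrightarrow> \<exists>i<n. y - t i \<in> {a i<..<a (Suc i)}"
  shows "ennreal (q - p) \<le> (\<Sum>i<n. emeasure lborel {max (a i) (p - t i)<..<min (a (Suc i)) (q - t i)})"
proof -
  define Q where "Q i = {max (a i + t i) p <..< min (a (Suc i) + t i) q}" for i
  have "{p<..<q} \<subseteq> (\<Union>i<n. Q i) \<union> Z"
  proof
    fix y assume y: "y \<in> {p<..<q}"
    show "y \<in> (\<Union>i<n. Q i) \<union> Z"
    proof (cases "y \<in> Z")
      case False
      then obtain i where "i < n" "y - t i \<in> {a i<..<a (Suc i)}"
        using cover y by blast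
      then have "i < n" "y \<in> Q i"
        using y by (auto simp: Q_def)
      then show ?thesis by blast
    qed simp
  qed
  moreover have null: "Z \<in> null_sets lborel"
    using assms(1) by (rule finite_imp_null_set_lborel)
  ultimately have "emeasure lborel {p<..<q} \<le> emeasure lborel ((\<Union>i<n. Q i) \<union> Z)"
    by (intro emeasure_mono) (auto simp: Q_def)
  also have "\<dots> = emeasure lborel (\<Union>i<n. Q i)"
    using null by (intro emeasure_Un_null_set) (auto simp: Q_def)
  also have "\<dots> \<le> (\<Sum>i<n. emeasure lborel (Q i))"
    by (intro emeasure_subadditive_finite) (auto simp: Q_def)
  also have "\<dots> = (\<Sum>i<n. emeasure lborel {max (a i) (p - t i)<..<min (a (Suc i)) (q - t i)})"
  proof (intro sum.cong refl)
    fix i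
    have "min (a (Suc i) + t i) q - max (a i + t i) p = min (a (Suc i)) (q - t i) - max (a i) (p - t i)"
      by (simp add: min_def max_def)
    then show "emeasure lborel (Q i) = emeasure lborel {max (a i) (p - t i)<..<min (a (Suc i)) (q - t i)}"
      by (simp add: Q_def emeasure_lborel_Ioo_unconditional)
  qed
  finally show ?thesis
    using assms(2) by simp
qed

lemma disjoint_family_on_chain_pieces:
  fixes a :: "nat \<Rightarrow> 'a::linorder"
  assumes "\<And>i j. i \<le> j \<Longrightarrow> j \<le> n \<Longrightarrow> a i \<le> a j" and "\<And>i. P i \<subseteq> {a i<..<a (Suc i)}"
  shows "disjoint_family_on P {..<n}"
  unfolding disjoint_family_on_def
proof (intro ballI impI)
  have disjoint: "P i \<inter> P j = {}" if "i < j" "j < n" for i j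
    using assms(1)[of "Suc i" j] assms(2)[of i] assms(2)[of j] that by fastforce
  fix i j assume "i \<in> {..<n}" "j \<in> {..<n}" "i \<noteq> j"
  then consider "i < j" "j < n" | "j < i" "i < n"
    by fastforce
  then show "P i \<inter> P j = {}"
    by cases (use disjoint[of i j] disjoint[of j i] in auto)
qed

lemma iet_map_preimage_interval:
  assumes "iet_map f" and "0 \<le> p" and "p < q" and "q \<le> 1"
  shows "\<exists>B\<in>sets lborel. B \<subseteq> {0..<1} \<and> (\<forall>x\<in>B. f x \<in> {p<..<q}) \<and>
           ennreal (q - p) \<le> emeasure lborel B"
proof -
  obtain n a t where a0: "a 0 = 0" and an: "a n = 1"
    and mono: "\<And>i j. i \<le> j \<Longrightarrow> j \<le> n \<Longrightarrow> a i \<le> a j"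
    and pieces: "\<And>i x. i < n \<Longrightarrow> x \<in> {a i<..<a (Suc i)} \<Longrightarrow> f x = x + t i"
    and cover: "\<And>y. y \<in> {0..<1} \<Longrightarrow> \<exists>i<n. a i \<le> y \<and> y < a (Suc i)"
    using iet_map_piecesE[OF assms(1)] by metis
  have bij: "bij_betw f {0..<1} {0..<1}"
    using assms(1) unfolding iet_map_def by auto
  \<comment> \<open>the points of the i-th piece that are mapped into (p, q)\<close>
  define P where "P i = {max (a i) (p - t i) <..< min (a (Suc i)) (q - t i)}" for i
  define B where "B = (\<Union>i<n. P i)"
  have "{a i<..<a (Suc i)} \<subseteq> {0..<1}" if "i < n" for i
    using mono[of 0 i] mono[of "Suc i" n] a0 an that by auto
  then have "B \<subseteq> {0..<1}"
    by (fastforce simp: B_def P_def)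
  moreover have "\<forall>x\<in>B. f x \<in> {p<..<q}"
    using pieces by (auto simp: B_def P_def)
  moreover have "ennreal (q - p) \<le> (\<Sum>i<n. emeasure lborel (P i))"
    unfolding P_def
  proof (rule emeasure_Ioo_le_sum_translates[where Z = "f ` a ` {..<n}"])
    fix y assume y: "y \<in> {p<..<q}" and "y \<notin> f ` a ` {..<n}"
    have "y \<in> f ` {0..<1}"
      using bij y assms(2,4) by (simp add: bij_betw_def)
    then obtain x where x: "x \<in> {0..<1}" "y = f x"
      by blast
    then obtain i where i: "i < n" "a i \<le> x" "x < a (Suc i)"
      using cover by blast
    then have "a i \<noteq> x"
      using x \<open>y \<notin> f ` a ` {..<n}\<close> by blast
    then have "y - t i = x" and "x \<in> {a i<..<a (Suc i)}"
      using pieces i x by auto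
    then show "\<exists>i<n. y - t i \<in> {a i<..<a (Suc i)}"
      using i by auto
  qed (use assms(3) in simp_all)
  moreover have "(\<Sum>i<n. emeasure lborel (P i)) = emeasure lborel B"
    unfolding B_def
    by (rule sum_emeasure[OF _ disjoint_family_on_chain_pieces[OF mono]]) (auto simp: P_def)
  moreover have "B \<in> sets lborel"
    by (auto simp: B_def P_def)
  ultimately show ?thesis
    by auto
qed

section \<open>Counting estimates\<close>

lemma ex_point_in_many_sets:
  fixes B :: "nat \<Rightarrow> 'a set"
  assumes "\<And>n. B n \<in> sets M" and "emeasure M (space M) \<le> 1"
    and "\<And>n. ennreal c \<le> emeasure M (B n)" and "real k < real N * c"
  shows "\<exists>x\<in>space M. k < card {n. n < N \<and> x \<in> B n}"
proof (rule ccontr)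
  assume "\<not> ?thesis"
  then have few: "card {n. n < N \<and> x \<in> B n} \<le> k" if "x \<in> space M" for x
    using that by (simp add: not_less)
  have "0 \<le> c"
    using assms(4) by (smt (verit) mult_nonneg_nonpos of_nat_0_le_iff)
  then have "ennreal (real N * c) = (\<Sum>n<N. ennreal c)"
    by (simp add: ennreal_mult' ennreal_of_nat_eq_real_of_nat)
  also have "\<dots> \<le> (\<Sum>n<N. emeasure M (B n))"
    by (intro sum_mono assms(3))
  also have "\<dots> = (\<integral>\<^sup>+x. (\<Sum>n<N. indicator (B n) x) \<partial>M)"
    using assms(1) by (simp add: nn_integral_sum)
  also have "\<dots> \<le> (\<integral>\<^sup>+x. of_nat k \<partial>M)"
  proof (intro nn_integral_mono)
    fix x assume "x \<in> space M"
    have "(\<Sum>n<N. indicator (B n) x) = (of_nat (card {n. n < N \<and> x \<in> B n}) :: ennreal)"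
      by (simp add: indicator_def sum.If_cases Int_def)
    also have "\<dots> \<le> of_nat k" using few[OF \<open>x \<in> space M\<close>] by simp
    finally show "(\<Sum>n<N. indicator (B n) x) \<le> (of_nat k :: ennreal)" .
  qed
  also have "\<dots> \<le> of_nat k"
    using assms(2) by (simp add: mult_left_le)
  finally have "real N * c \<le> real k"
    by (simp add: ennreal_of_nat_eq_real_of_nat ennreal_le_iff)
  then show False using assms(4) by simp
qed

lemma iet_maps_often_in_interval:
  assumes "\<And>n. iet_map (f n)" and "0 \<le> p" and "p < q" and "q \<le> 1"
    and "real k < real N * (q - p)"
  shows "\<exists>x. k < card {n. n < N \<and> f n x \<in> {p<..<q}}"
proof -
  let ?M = "restrict_space lborel {0..<1::real}"
  obtain B where B: "\<And>n. B n \<in> sets lborel" "\<And>n. B n \<subseteq> {0..<1}"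
    "\<And>n x. x \<in> B n \<Longrightarrow> f n x \<in> {p<..<q}" "\<And>n. ennreal (q - p) \<le> emeasure lborel (B n)"
    using iet_map_preimage_interval[OF assms(1-4)] by metis
  have "\<exists>x\<in>space ?M. k < card {n. n < N \<and> x \<in> B n}"
    using B assms(5)
    by (intro ex_point_in_many_sets) (simp_all add: sets_restrict_space_iff emeasure_restrict_space)
  then obtain x where "k < card {n. n < N \<and> x \<in> B n}" by blast
  also have "\<dots> \<le> card {n. n < N \<and> f n x \<in> {p<..<q}}"
    using B(3) by (intro card_mono) auto
  finally show ?thesis by blast
qed

lemma ex_square_less_and_poly_less_two_pow:
  fixes l :: real and k d :: nat
  assumes "0 < l"
  shows "\<exists>j N. real (j\<^sup>2) < real N * l \<and> Suc (k * N) ^ d < 2 ^ j"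
proof -
  define c where "c = real k + 1"
  have "c > 0" by (simp add: c_def)
  then have "((\<lambda>j::nat. (c * ((real j ^ 2 + 1) / l + 1) + 1) ^ d / 2 ^ j) \<longlonglongrightarrow> 0)"
    using assms by real_asymp
  then have "\<forall>\<^sub>F j in sequentially. (c * ((real j ^ 2 + 1) / l + 1) + 1) ^ d / 2 ^ j < 1"
    by (rule order_tendstoD(2)) simp
  then obtain j where j: "(c * ((real j ^ 2 + 1) / l + 1) + 1) ^ d < 2 ^ j"
    unfolding eventually_sequentially by (auto simp: divide_less_eq)
  define N where "N = nat \<lceil>(real j ^ 2 + 1) / l\<rceil>"
  have N_ge: "(real j ^ 2 + 1) / l \<le> real N"
    unfolding N_def by linarith
  have N_le: "real N \<le> (real j ^ 2 + 1) / l + 1"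
    using assms unfolding N_def by (simp add: add_pos_nonneg)
  have "real (j\<^sup>2) < real N * l"
    using N_ge assms by (simp add: divide_le_eq)
  moreover have "real (Suc (k * N)) \<le> c * ((real j ^ 2 + 1) / l + 1) + 1"
  proof -
    have "real (k * N) \<le> c * real N"
      by (simp add: c_def distrib_right)
    also have "\<dots> \<le> c * ((real j ^ 2 + 1) / l + 1)"
      using N_le \<open>c > 0\<close> by (intro mult_left_mono) auto
    finally show ?thesis by simp
  qed
  then have "real (Suc (k * N)) ^ d < 2 ^ j"
    using j by (meson le_less_trans of_nat_0_le_iff power_mono)
  then have "Suc (k * N) ^ d < (2::nat) ^ j"
    by (metis of_nat_less_numeral_power_cancel_iff of_nat_power)
  ultimately show ?thesis by blast
qed

definition bounded_sums :: "'a::semiring_1 set \<Rightarrow> nat \<Rightarrow> 'a set" where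
  "bounded_sums D k = (\<lambda>c. \<Sum>d\<in>D. of_nat (c d) * d) ` (D \<rightarrow>\<^sub>E {..k})"

lemma zero_in_bounded_sums: "0 \<in> bounded_sums D 0"
  unfolding bounded_sums_def by (rule image_eqI[of _ _ "\<lambda>d\<in>D. 0"]) auto

lemma add_in_bounded_sums:
  assumes "finite D" and "d \<in> D" and "s \<in> bounded_sums D k"
  shows "d + s \<in> bounded_sums D (Suc k)"
proof -
  obtain c where c: "c \<in> D \<rightarrow>\<^sub>E {..k}" and s: "s = (\<Sum>e\<in>D. of_nat (c e) * e)"
    using assms(3) unfolding bounded_sums_def by blast
  have "c(d := Suc (c d)) \<in> D \<rightarrow>\<^sub>E {..Suc k}"
    using c assms(2) by (auto simp: PiE_iff extensional_def)
  moreover have "d + s = (\<Sum>e\<in>D. of_nat ((c(d := Suc (c d))) e) * e)"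
    using assms(1,2) by (simp add: s sum.remove distrib_right add_ac)
  ultimately show ?thesis
    unfolding bounded_sums_def by blast
qed

lemma finite_bounded_sums: "finite D \<Longrightarrow> finite (bounded_sums D k)"
  unfolding bounded_sums_def by (intro finite_imageI finite_PiE) auto

lemma card_bounded_sums_le:
  assumes "finite D"
  shows "card (bounded_sums D k) \<le> Suc k ^ card D"
proof -
  have "card (bounded_sums D k) \<le> card (D \<rightarrow>\<^sub>E {..k})"
    unfolding bounded_sums_def using assms by (intro card_image_le finite_PiE) auto
  also have "\<dots> = Suc k ^ card D"
    using assms by (simp add: card_PiE)
  finally show ?thesis .
qed

section \<open>Embeddings of F wr Z into IET\<close>

locale wreath_Z_into_IET = group F for F :: "('a, 'b) monoid_scheme" (structure) +
  fixes \<phi> :: "(int \<Rightarrow> 'a) \<times> int \<Rightarrow> real \<Rightarrow> real"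
  assumes hom: "\<phi> \<in> hom (wreath_Z F) IET"
    and inj: "inj_on \<phi> (carrier (wreath_Z F))"
    and finite_carrier: "finite (carrier F)"
begin

abbreviation L where "L \<equiv> wreath_Z F"

lemma carrier_L_iff: "(h, n) \<in> carrier L \<longleftrightarrow> (\<forall>i. h i \<in> carrier F) \<and> finite {i. h i \<noteq> \<one>}"
  by (simp add: wreath_Z_def)

lemma mult_L: "(g, m) \<otimes>\<^bsub>L\<^esub> (h, n) = (\<lambda>i. g i \<otimes> h (i - m), m + n)"
  by (simp add: wreath_Z_def)

lemma iet_map_\<phi>: "x \<in> carrier L \<Longrightarrow> iet_map (\<phi> x)"
  using hom by (auto simp: hom_def IET_def)

lemma \<phi>_mult: "x \<in> carrier L \<Longrightarrow> y \<in> carrier L \<Longrightarrow> \<phi> (x \<otimes>\<^bsub>L\<^esub> y) = \<phi> x \<circ> \<phi> y"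
  using hom by (simp add: hom_def IET_def)

lemma \<phi>_one: "\<phi> (\<lambda>_. \<one>, 0) = id"
proof -
  have one: "(\<lambda>_. \<one>, 0) \<in> carrier L"
    by (simp add: carrier_L_iff)
  have "\<phi> (\<lambda>_. \<one>, 0) \<circ> \<phi> (\<lambda>_. \<one>, 0) = \<phi> (\<lambda>_. \<one>, 0)"
    using \<phi>_mult[OF one one] by (simp add: mult_L)
  then have "\<phi> (\<lambda>_. \<one>, 0) (\<phi> (\<lambda>_. \<one>, 0) y) = \<phi> (\<lambda>_. \<one>, 0) y" for y
    by (simp add: fun_eq_iff)
  then show ?thesis
    using iet_map_inj[OF iet_map_\<phi>[OF one]] by (auto simp: inj_def)
qed

definition base :: "(int \<Rightarrow> 'a) \<Rightarrow> real \<Rightarrow> real" where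
  "base h = \<phi> (h, 0)"

definition shift :: "int \<Rightarrow> real \<Rightarrow> real" where
  "shift n = \<phi> (\<lambda>_. \<one>, n)"

definition single :: "int \<Rightarrow> 'a \<Rightarrow> int \<Rightarrow> 'a" where
  "single m c = (\<lambda>i. if i = m then c else \<one>)"

definition supported :: "int set \<Rightarrow> (int \<Rightarrow> 'a) set" where
  "supported J = {h. (\<forall>i. h i \<in> carrier F) \<and> (\<forall>i. i \<notin> J \<longrightarrow> h i = \<one>)}"

definition base_orbit :: "real \<Rightarrow> int set \<Rightarrow> real set" where
  "base_orbit x J = (\<lambda>h. base h x) ` supported J"

lemma shift_in_carrier: "(\<lambda>_. \<one>, n) \<in> carrier L"
  by (simp add: carrier_L_iff)

lemma supported_in_carrier: "finite J \<Longrightarrow> h \<in> supported J \<Longrightarrow> (h, n) \<in> carrier L"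
  unfolding supported_def carrier_L_iff by (auto elim: finite_subset[rotated])

lemma single_in_supported: "c \<in> carrier F \<Longrightarrow> single m c \<in> supported {m}"
  by (simp add: supported_def single_def)

lemma single_in_carrier: "c \<in> carrier F \<Longrightarrow> (single m c, n) \<in> carrier L"
  using supported_in_carrier single_in_supported by blast

lemma supported_mono: "J \<subseteq> J' \<Longrightarrow> supported J \<subseteq> supported J'"
  unfolding supported_def by auto

lemma one_in_supported: "(\<lambda>_. \<one>) \<in> supported J"
  by (simp add: supported_def)

lemma mult_in_supported:
  "h \<in> supported J \<Longrightarrow> h' \<in> supported J \<Longrightarrow> (\<lambda>i. h i \<otimes> h' i) \<in> supported J"
  unfolding supported_def by auto

lemma inv_in_supported: "h \<in> supported J \<Longrightarrow> (\<lambda>i. inv (h i)) \<in> supported J"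
  unfolding supported_def by auto

lemma finite_supported:
  assumes "finite J"
  shows "finite (supported J)"
proof -
  have "supported J \<subseteq> (\<lambda>g i. if i \<in> J then g i else \<one>) ` (J \<rightarrow>\<^sub>E carrier F)"
  proof
    fix h assume h: "h \<in> supported J"
    then have "h = (\<lambda>i. if i \<in> J then restrict h J i else \<one>)"
      by (auto simp: supported_def)
    moreover have "restrict h J \<in> J \<rightarrow>\<^sub>E carrier F"
      using h by (auto simp: supported_def)
    ultimately show "h \<in> (\<lambda>g i. if i \<in> J then g i else \<one>) ` (J \<rightarrow>\<^sub>E carrier F)"
      by blast
  qed
  moreover have "finite (J \<rightarrow>\<^sub>E carrier F)"
    using assms finite_carrier by (rule finite_PiE)
  ultimately show ?thesis
    by (rule finite_subset[OF _ finite_imageI])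
qed

lemma iet_map_base: "(h, 0) \<in> carrier L \<Longrightarrow> iet_map (base h)"
  unfolding base_def by (rule iet_map_\<phi>)

lemma iet_map_shift: "iet_map (shift n)"
  unfolding shift_def by (rule iet_map_\<phi>[OF shift_in_carrier])

lemma base_one: "base (\<lambda>_. \<one>) = id"
  by (simp add: base_def \<phi>_one)

lemma base_mult:
  assumes "(h, 0) \<in> carrier L" and "(h', 0) \<in> carrier L"
  shows "base (\<lambda>i. h i \<otimes> h' i) = base h \<circ> base h'"
  using \<phi>_mult[OF assms] by (simp add: base_def mult_L)

lemma shift_add: "shift m \<circ> shift n = shift (m + n)"
  using \<phi>_mult[OF shift_in_carrier shift_in_carrier] by (simp add: shift_def mult_L)

lemma shift_inverse: "shift (- n) (shift n y) = y"
  using fun_cong[OF shift_add[of "- n" n]] \<phi>_one by (simp add: shift_def)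

lemma shifted_in_carrier:
  assumes "(h, m) \<in> carrier L"
  shows "(\<lambda>i. h (i - n), k) \<in> carrier L"
proof -
  have "finite ((\<lambda>i. i - n) -` {i. h i \<noteq> \<one>})"
    using assms by (intro finite_vimageI) (auto simp: carrier_L_iff inj_def)
  then show ?thesis
    using assms by (simp add: carrier_L_iff vimage_def)
qed

lemma base_shift_conj:
  assumes h: "(h, 0) \<in> carrier L"
  shows "base (\<lambda>i. h (i - n)) = shift n \<circ> base h \<circ> shift (- n)"
proof -
  have "base (\<lambda>i. h (i - n)) = \<phi> ((\<lambda>i. h (i - n), n) \<otimes>\<^bsub>L\<^esub> (\<lambda>_. \<one>, - n))"
    using h by (simp add: base_def mult_L carrier_L_iff)
  also have "\<dots> = \<phi> (\<lambda>i. h (i - n), n) \<circ> shift (- n)"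
    using \<phi>_mult[OF shifted_in_carrier[OF h] shift_in_carrier] by (simp add: shift_def)
  also have "\<phi> (\<lambda>i. h (i - n), n) = shift n \<circ> base h"
    using \<phi>_mult[OF shift_in_carrier h] h by (simp add: base_def shift_def mult_L carrier_L_iff)
  finally show ?thesis .
qed

lemma base_single_shift:
  assumes "c \<in> carrier F"
  shows "base (single m c) = shift m \<circ> base (single 0 c) \<circ> shift (- m)"
proof -
  have "(\<lambda>i. single 0 c (i - m)) = single m c"
    by (auto simp: single_def)
  then show ?thesis
    using base_shift_conj[OF single_in_carrier[OF assms, of 0 0], of m] by simp
qed

lemma base_single_mult:
  assumes "c \<in> carrier F" and "d \<in> carrier F"
  shows "base (single m c) (base (single m d) y) = base (single m (c \<otimes> d)) y"
proof -
  have "base (single m (c \<otimes> d)) = base (\<lambda>i. single m c i \<otimes> single m d i)"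
    using assms by (intro arg_cong[where f = base]) (auto simp: single_def)
  also have "\<dots> = base (single m c) \<circ> base (single m d)"
    using assms by (intro base_mult single_in_carrier)
  finally show ?thesis
    by simp
qed

lemma base_single_neq_id:
  assumes "c \<in> carrier F" and "c \<noteq> \<one>"
  shows "base (single m c) \<noteq> id"
proof
  assume "base (single m c) = id"
  then have "\<phi> (single m c, 0) = \<phi> (\<lambda>_. \<one>, 0)"
    by (simp add: base_def \<phi>_one)
  then have "(single m c, 0) = ((\<lambda>_. \<one>, 0) :: (int \<Rightarrow> 'a) \<times> int)"
    using inj_onD[OF inj _ single_in_carrier[OF assms(1)] shift_in_carrier] by blast
  then have "single m c m = \<one>"
    by (metis fst_conv)
  then show False
    using assms(2) by (simp add: single_def)
qed

lemma base_commute: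
  assumes "finite J" "finite J'" "h \<in> supported J" "h' \<in> supported J'" "J \<inter> J' = {}"
  shows "base h (base h' y) = base h' (base h y)"
proof -
  have h: "(h, 0) \<in> carrier L" and h': "(h', 0) \<in> carrier L"
    using supported_in_carrier assms(1-4) by blast+
  have comm: "h i \<otimes> h' i = h' i \<otimes> h i" for i
  proof (cases "i \<in> J")
    case True
    then have "h' i = \<one>" using assms(4,5) by (auto simp: supported_def)
    then show ?thesis using assms(3) by (simp add: supported_def)
  next
    case False
    then have "h i = \<one>" using assms(3) by (simp add: supported_def)
    then show ?thesis using assms(4) by (simp add: supported_def)
  qed
  have "base h \<circ> base h' = base (\<lambda>i. h i \<otimes> h' i)"
    by (rule base_mult[OF h h', symmetric])
  also have "\<dots> = base (\<lambda>i. h' i \<otimes> h i)"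
    using comm by simp
  also have "\<dots> = base h' \<circ> base h"
    by (rule base_mult[OF h' h])
  finally show ?thesis
    by (simp add: fun_eq_iff)
qed

lemma base_inverse:
  assumes "finite J" and "h \<in> supported J"
  shows "base (\<lambda>i. inv (h i)) (base h y) = y"
proof -
  have "base (\<lambda>i. inv (h i)) \<circ> base h = base (\<lambda>i. inv (h i) \<otimes> h i)"
    using assms by (intro base_mult[symmetric] supported_in_carrier inv_in_supported)
  also have "\<dots> = id"
    using assms(2) base_one by (simp add: supported_def)
  finally show ?thesis
    by (simp add: fun_eq_iff)
qed

section \<open>Orbits under the base group\<close>

lemma base_orbit_mono: "J \<subseteq> J' \<Longrightarrow> base_orbit x J \<subseteq> base_orbit x J'"
  unfolding base_orbit_def using supported_mono by blast

lemma finite_base_orbit: "finite J \<Longrightarrow> finite (base_orbit x J)"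
  unfolding base_orbit_def using finite_supported by blast

lemma self_in_base_orbit: "x \<in> base_orbit x J"
  using one_in_supported base_one unfolding base_orbit_def by (metis id_apply image_eqI)

lemma card_base_orbit_pos: "finite J \<Longrightarrow> 0 < card (base_orbit x J)"
  using finite_base_orbit self_in_base_orbit card_gt_0_iff by blast

lemma base_single_image_subset_insert:
  assumes "finite J" and "c \<in> carrier F"
  shows "base (single m c) ` base_orbit x J \<subseteq> base_orbit x (insert m J)"
proof clarify
  fix y assume "y \<in> base_orbit x J"
  then obtain h where h: "h \<in> supported J" and y: "y = base h x"
    unfolding base_orbit_def by blast
  have single: "single m c \<in> supported (insert m J)"
    using supported_mono[of "{m}" "insert m J"] single_in_supported[OF assms(2)] by blast
  have h': "h \<in> supported (insert m J)"
    using supported_mono[of J "insert m J"] h by blast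
  have "base (\<lambda>i. single m c i \<otimes> h i) = base (single m c) \<circ> base h"
    using assms h by (intro base_mult single_in_carrier supported_in_carrier)
  then have "base (single m c) y = base (\<lambda>i. single m c i \<otimes> h i) x"
    by (simp add: y)
  moreover have "(\<lambda>i. single m c i \<otimes> h i) \<in> supported (insert m J)"
    using single h' by (rule mult_in_supported)
  ultimately show "base (single m c) y \<in> base_orbit x (insert m J)"
    unfolding base_orbit_def by blast
qed

lemma base_orbit_insert_subset:
  assumes "finite J"
  shows "base_orbit x (insert m J) \<subseteq> (\<Union>c\<in>carrier F. base (single m c) ` base_orbit x J)"
proof
  fix z assume "z \<in> base_orbit x (insert m J)"
  then obtain h where h: "h \<in> supported (insert m J)" and z: "z = base h x"
    unfolding base_orbit_def by blast
  define h' where "h' = h(m := \<one>)"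
  have hm: "h m \<in> carrier F" and h': "h' \<in> supported J"
    using h by (auto simp: supported_def h'_def)
  have "h = (\<lambda>i. single m (h m) i \<otimes> h' i)"
    using h by (auto simp: supported_def single_def h'_def)
  then have "z = base (\<lambda>i. single m (h m) i \<otimes> h' i) x"
    using z by simp
  then have "z = base (single m (h m)) (base h' x)"
    using base_mult[OF single_in_carrier[OF hm, of m 0] supported_in_carrier[OF assms h']] by simp
  moreover have "base h' x \<in> base_orbit x J"
    using h' unfolding base_orbit_def by blast
  ultimately show "z \<in> (\<Union>c\<in>carrier F. base (single m c) ` base_orbit x J)"
    using hm by blast
qed

text \<open>The key point is that base (single m c) commutes with the group supported on J.\<close>
lemma base_single_image_subset_if_meets:
  assumes "finite J" and "m \<notin> J" and "c \<in> carrier F"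
    and "y \<in> base_orbit x J" and "base (single m c) y \<in> base_orbit x J"
  shows "base (single m c) ` base_orbit x J \<subseteq> base_orbit x J"
proof clarify
  let ?g = "base (single m c)"
  have commute: "?g (base u z) = base u (?g z)" if "u \<in> supported J" for u z
    using base_commute[OF _ assms(1) single_in_supported[OF assms(3)] that] assms(2) by simp
  obtain v where v: "v \<in> supported J" "y = base v x"
    using assms(4) unfolding base_orbit_def by blast
  obtain v' where v': "v' \<in> supported J" "?g y = base v' x"
    using assms(5) unfolding base_orbit_def by blast
  have vi: "(\<lambda>i. inv (v i)) \<in> supported J"
    using v(1) by (rule inv_in_supported)
  have gx: "?g x = base (\<lambda>i. inv (v i)) (base v' x)"
    using base_inverse[OF assms(1) v(1), of "?g x"] commute[OF v(1)] v v' by simp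
  fix w assume "w \<in> base_orbit x J"
  then obtain u where u: "u \<in> supported J" "w = base u x"
    unfolding base_orbit_def by blast
  let ?u' = "\<lambda>i. u i \<otimes> (inv (v i) \<otimes> v' i)"
  have "?g w = base u (base (\<lambda>i. inv (v i)) (base v' x))"
    using u commute gx by simp
  also have "\<dots> = base ?u' x"
    using base_mult[OF supported_in_carrier supported_in_carrier, OF assms(1) u(1) assms(1) mult_in_supported[OF vi v'(1)]]
      base_mult[OF supported_in_carrier supported_in_carrier, OF assms(1) vi assms(1) v'(1)]
    by simp
  finally show "?g w \<in> base_orbit x J"
    using mult_in_supported[OF u(1) mult_in_supported[OF vi v'(1)]] unfolding base_orbit_def by blast
qed

lemma card_base_orbit_insert_ge_double:
  assumes "finite J" and "m \<notin> J" and "c \<in> carrier F"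
    and "\<not> base (single m c) ` base_orbit x J \<subseteq> base_orbit x J"
  shows "2 * card (base_orbit x J) \<le> card (base_orbit x (insert m J))"
proof -
  let ?g = "base (single m c)"
  have disjoint: "?g ` base_orbit x J \<inter> base_orbit x J = {}"
    using base_single_image_subset_if_meets[OF assms(1-3)] assms(4) by blast
  have "inj ?g"
    using iet_map_inj[OF iet_map_base[OF single_in_carrier[OF assms(3)]]] .
  then have "card (?g ` base_orbit x J) = card (base_orbit x J)"
    by (simp add: card_image inj_on_subset)
  moreover have "card (base_orbit x J \<union> ?g ` base_orbit x J) = card (base_orbit x J) + card (?g ` base_orbit x J)"
    using disjoint finite_base_orbit[OF assms(1)] by (simp add: card_Un_disjoint Int_commute)
  moreover have "base_orbit x J \<union> ?g ` base_orbit x J \<subseteq> base_orbit x (insert m J)"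
    using base_orbit_mono[of J "insert m J"] base_single_image_subset_insert[OF assms(1,3)] by blast
  then have "card (base_orbit x J \<union> ?g ` base_orbit x J) \<le> card (base_orbit x (insert m J))"
    using assms(1) by (simp add: card_mono finite_base_orbit)
  ultimately show ?thesis by simp
qed

lemma base_orbit_Un_subset_if_invariant:
  assumes "finite R" and "finite J"
    and "\<And>m c. m \<in> R \<Longrightarrow> c \<in> carrier F \<Longrightarrow> base (single m c) ` base_orbit x J \<subseteq> base_orbit x J"
  shows "base_orbit x (J \<union> R) \<subseteq> base_orbit x J"
  using assms(1,3)
proof (induction R rule: finite_induct)
  case empty
  then show ?case by simp
next
  case (insert m R)
  have "base_orbit x (J \<union> insert m R) = base_orbit x (insert m (J \<union> R))"
    by simp
  also have "\<dots> \<subseteq> (\<Union>c\<in>carrier F. base (single m c) ` base_orbit x (J \<union> R))"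
    using insert.hyps(1) assms(2) by (intro base_orbit_insert_subset) simp
  also have "\<dots> \<subseteq> (\<Union>c\<in>carrier F. base (single m c) ` base_orbit x J)"
    using insert by (intro UN_mono image_mono) auto
  also have "\<dots> \<subseteq> base_orbit x J"
    using insert.prems by blast
  finally show ?case .
qed

lemma base_orbit_eq_or_card_ge_double:
  assumes "finite J'" and "J \<subseteq> J'"
  shows "base_orbit x J' = base_orbit x J \<or> 2 * card (base_orbit x J) \<le> card (base_orbit x J')"
proof (cases "\<forall>m\<in>J' - J. \<forall>c\<in>carrier F. base (single m c) ` base_orbit x J \<subseteq> base_orbit x J")
  case True
  have "finite J"
    using assms finite_subset by blast
  then have "base_orbit x (J \<union> (J' - J)) \<subseteq> base_orbit x J"
    using True assms(1) by (intro base_orbit_Un_subset_if_invariant) auto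
  moreover have "J \<union> (J' - J) = J'"
    using assms(2) by blast
  ultimately have "base_orbit x J' \<subseteq> base_orbit x J"
    by simp
  then show ?thesis
    using base_orbit_mono[OF assms(2), of x] by blast
next
  case False
  then obtain m c where m: "m \<in> J' - J" and c: "c \<in> carrier F"
    and moves: "\<not> base (single m c) ` base_orbit x J \<subseteq> base_orbit x J"
    by blast
  have "finite J"
    using assms finite_subset by blast
  then have "2 * card (base_orbit x J) \<le> card (base_orbit x (insert m J))"
    using m c moves by (intro card_base_orbit_insert_ge_double) auto
  also have "\<dots> \<le> card (base_orbit x J')"
    using assms m by (intro card_mono finite_base_orbit base_orbit_mono) auto
  finally show ?thesis ..
qed

text \<open>An element of the group supported on I' that moves x like base (single m b) also acts
  like it on the whole orbit of x under the group supported on J, as both commute with that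
  group.\<close>
lemma base_singles_commute_at_if_invariant:
  assumes "finite J" and "finite I'" and "J \<inter> I' = {}" and "m \<notin> J" and "m \<notin> I'"
    and "base_orbit x I' \<subseteq> base_orbit x J" and "a \<in> carrier F" and "b \<in> carrier F"
    and "base (single m a) ` base_orbit x I' \<subseteq> base_orbit x I'"
    and "base (single m b) ` base_orbit x I' \<subseteq> base_orbit x I'"
  shows "base (single m a) (base (single m b) x) = base (single m b) (base (single m a) x)"
proof -
  let ?a = "base (single m a)" and ?b = "base (single m b)"
  have "?a x \<in> base_orbit x I'" and "?b x \<in> base_orbit x I'"
    using assms(9,10) self_in_base_orbit by blast+
  then obtain r s where r: "r \<in> supported I'" "?a x = base r x"
    and s: "s \<in> supported I'" "?b x = base s x"
    unfolding base_orbit_def by blast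
  have b_on_orbit: "?b y = base s y" if y: "y \<in> base_orbit x J" for y
  proof -
    obtain w where w: "w \<in> supported J" "y = base w x"
      using y unfolding base_orbit_def by blast
    have "?b (base w x) = base w (?b x)"
      using assms(1,4,8) w(1) by (intro base_commute[of "{m}" J] single_in_supported) auto
    also have "\<dots> = base s (base w x)"
      using s assms(1-3) w(1) by (simp add: base_commute)
    finally show ?thesis using w(2) by simp
  qed
  have "base r x \<in> base_orbit x J"
    using r(1) assms(6) unfolding base_orbit_def by blast
  have "?a (?b x) = ?a (base s x)"
    using s by simp
  also have "\<dots> = base s (?a x)"
    using assms(2,5,7) s(1) by (intro base_commute[of "{m}" I'] single_in_supported) auto
  also have "\<dots> = ?b (base r x)"
    using r b_on_orbit[OF \<open>base r x \<in> base_orbit x J\<close>] by simp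
  finally show ?thesis
    using r by simp
qed

lemma two_pow_card_diff_le_card_base_orbit_if_saturated:
  assumes "finite E" and "E0 \<subseteq> E" and saturated: "base_orbit x E = base_orbit x E0"
    and "a \<in> carrier F" and "b \<in> carrier F"
    and noncommuting: "\<And>m. m \<in> E - E0 \<Longrightarrow>
      base (single m a) (base (single m b) x) \<noteq> base (single m b) (base (single m a) x)"
  shows "2 ^ card (E - E0) \<le> card (base_orbit x E)"
proof -
  have "finite E0"
    using assms(1,2) finite_subset by blast
  have doubling: "2 ^ card I \<le> card (base_orbit x I)" if "finite I" "I \<subseteq> E - E0" for I
    using that
  proof (induction I rule: finite_induct)
    case empty
    then show ?case
      using card_base_orbit_pos[of "{}" x] by simp
  next
    case (insert m I)
    have "I \<subseteq> E"
      using insert.prems by auto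
    then have "base_orbit x I \<subseteq> base_orbit x E0"
      using base_orbit_mono[of I E x] saturated by simp
    moreover have "E0 \<inter> I = {}" and "m \<notin> E0" and "m \<in> E - E0"
      using insert.prems by auto
    ultimately obtain c where c: "c \<in> carrier F" "\<not> base (single m c) ` base_orbit x I \<subseteq> base_orbit x I"
      using base_singles_commute_at_if_invariant[OF \<open>finite E0\<close> insert.hyps(1), of m x a b]
        noncommuting[of m] insert.hyps(2) assms(4,5) by blast
    have "2 ^ card (insert m I) = 2 * 2 ^ card I"
      using insert.hyps by simp
    also have "\<dots> \<le> 2 * card (base_orbit x I)"
      using insert.IH insert.prems by simp
    also have "\<dots> \<le> card (base_orbit x (insert m I))"
      using insert.hyps c by (intro card_base_orbit_insert_ge_double)
    finally show ?case .
  qed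
  have "2 ^ card (E - E0) \<le> card (base_orbit x (E - E0))"
    using doubling[of "E - E0"] assms(1) by simp
  also have "\<dots> \<le> card (base_orbit x E)"
    using assms(1) base_orbit_mono[of "E - E0" E x] by (intro card_mono finite_base_orbit) auto
  finally show ?thesis .
qed

text \<open>Passing from j^2 to (j + 1)^2 coordinates, either the orbit doubles, or it has stopped
  growing and then each of the remaining 2j + 1 coordinates doubles it.\<close>
lemma two_pow_le_card_base_orbit:
  assumes "a \<in> carrier F" and "b \<in> carrier F"
    and noncommuting: "\<And>m. m \<in> G \<Longrightarrow>
      base (single m a) (base (single m b) x) \<noteq> base (single m b) (base (single m a) x)"
    and "finite E" and "E \<subseteq> G" and "j\<^sup>2 \<le> card E"
  shows "2 ^ j \<le> card (base_orbit x E)"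
  using assms(4-6)
proof (induction j arbitrary: E)
  case 0
  then show ?case
    using card_base_orbit_pos[of E x] by simp
next
  case (Suc j)
  have "j\<^sup>2 \<le> (Suc j)\<^sup>2"
    by (simp add: power_mono)
  then have "j\<^sup>2 \<le> card E"
    using Suc.prems(3) by linarith
  then obtain E0 where E0: "E0 \<subseteq> E" "card E0 = j\<^sup>2"
    by (rule obtain_subset_with_card_n)
  then have "finite E0"
    using Suc.prems(1) finite_subset by blast
  then have IH: "2 ^ j \<le> card (base_orbit x E0)"
    using Suc.IH[of E0] E0 Suc.prems(2) by simp
  show ?case
  proof (rule ccontr)
    assume "\<not> ?case"
    then have small: "card (base_orbit x E) < 2 ^ Suc j"
      by simp
    then have "base_orbit x E = base_orbit x E0"
      using base_orbit_eq_or_card_ge_double[OF Suc.prems(1) E0(1), of x] IH by auto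
    then have "2 ^ card (E - E0) \<le> card (base_orbit x E)"
      using Suc.prems(2) noncommuting
      by (intro two_pow_card_diff_le_card_base_orbit_if_saturated[OF Suc.prems(1) E0(1) _ assms(1,2)])
        blast+
    then have "(2::nat) ^ card (E - E0) < 2 ^ Suc j"
      using small by simp
    then have "card (E - E0) < Suc j"
      by (rule power_less_imp_less_exp[rotated]) simp
    moreover have "card (E - E0) = card E - j\<^sup>2"
      using card_Diff_subset[OF \<open>finite E0\<close> E0(1)] E0(2) by simp
    moreover have "(Suc j)\<^sup>2 = j\<^sup>2 + 2 * j + 1"
      by (simp add: power2_eq_square)
    ultimately show False
      using Suc.prems(3) by linarith
  qed
qed

definition displacements :: "real set" where
  "displacements = (\<Union>c\<in>carrier F. range (\<lambda>y. base (single 0 c) y - y))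
     \<union> range (\<lambda>y. shift 1 y - y) \<union> range (\<lambda>y. shift (- 1) y - y)"

lemma finite_displacements: "finite displacements"
proof -
  have "finite (range (\<lambda>y. base (single 0 c) y - y))" if "c \<in> carrier F" for c
    using that by (intro finite_range_iet_map_displacement iet_map_base single_in_carrier)
  moreover have "finite (range (\<lambda>y. shift n y - y))" for n
    by (intro finite_range_iet_map_displacement iet_map_shift)
  ultimately show ?thesis
    unfolding displacements_def using finite_carrier by blast
qed

lemma base_single_displacement_in_displacements:
  "c \<in> carrier F \<Longrightarrow> base (single 0 c) y - y \<in> displacements"
  unfolding displacements_def by blast

lemma shift_displacement_in_displacements:
  shows "shift 1 y - y \<in> displacements" and "shift (- 1) y - y \<in> displacements"
  unfolding displacements_def by blast+

lemma base_peel_coordinate_zero: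
  assumes h: "h \<in> supported {0..<int (Suc N)}"
    and h': "h' = (\<lambda>i. if i < 0 then \<one> else h (i + 1))"
  shows "h' \<in> supported {0..<int N}"
    and "base h = base (single 0 (h 0)) \<circ> shift 1 \<circ> base h' \<circ> shift (- 1)"
proof -
  show h'_supported: "h' \<in> supported {0..<int N}"
    using h by (auto simp: supported_def h')
  then have h'_carrier: "(h', 0) \<in> carrier L"
    by (intro supported_in_carrier) simp_all
  have h0: "h 0 \<in> carrier F"
    using h by (simp add: supported_def)
  have "h = (\<lambda>i. single 0 (h 0) i \<otimes> h' (i - 1))"
  proof
    fix i
    have "h i \<in> carrier F" and "i < 0 \<Longrightarrow> h i = \<one>"
      using h by (auto simp: supported_def)
    then show "h i = single 0 (h 0) i \<otimes> h' (i - 1)"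
      using h0 by (cases "i = 0") (auto simp: single_def h')
  qed
  then have "base h = base (\<lambda>i. single 0 (h 0) i \<otimes> h' (i - 1))"
    by (rule arg_cong)
  also have "\<dots> = base (single 0 (h 0)) \<circ> base (\<lambda>i. h' (i - 1))"
    by (rule base_mult[OF single_in_carrier[OF h0, of 0 0] shifted_in_carrier[OF h'_carrier, of 1 0]])
  also have "base (\<lambda>i. h' (i - 1)) = shift 1 \<circ> base h' \<circ> shift (- 1)"
    by (rule base_shift_conj[OF h'_carrier])
  finally show "base h = base (single 0 (h 0)) \<circ> shift 1 \<circ> base h' \<circ> shift (- 1)"
    by (simp only: comp_assoc)
qed

text \<open>An element supported on {0..<N} is a word of length at most 3N in the single
  elements at coordinate 0 and the shifts by 1 and -1, so it displaces every point by a
  sum of at most 3N displacements of these generators.\<close>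
lemma base_displacement_in_bounded_sums:
  "h \<in> supported {0..<int N} \<Longrightarrow> base h y - y \<in> bounded_sums displacements (3 * N)"
proof (induction N arbitrary: h y)
  case 0
  then have "h = (\<lambda>_. \<one>)"
    by (auto simp: supported_def)
  then show ?case
    using zero_in_bounded_sums by (simp add: base_one)
next
  case (Suc N)
  define h' where "h' = (\<lambda>i. if i < 0 then \<one> else h (i + 1))"
  note peel = base_peel_coordinate_zero[OF Suc.prems h'_def]
  have h0: "h 0 \<in> carrier F"
    using Suc.prems by (simp add: supported_def)
  let ?z = "shift (- 1) y"
  have "base h y - y = (base (single 0 (h 0)) (shift 1 (base h' ?z)) - shift 1 (base h' ?z))
      + ((shift 1 (base h' ?z) - base h' ?z) + ((?z - y) + (base h' ?z - ?z)))"
    using peel(2) by simp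
  also have "\<dots> \<in> bounded_sums displacements (Suc (Suc (Suc (3 * N))))"
    using Suc.IH[OF peel(1)] by (intro add_in_bounded_sums finite_displacements h0
        base_single_displacement_in_displacements shift_displacement_in_displacements)
  finally show ?case
    by (simp only: mult_Suc_right numeral_3_eq_3 add_Suc add_0)
qed

lemma card_base_orbit_le:
  assumes "E \<subseteq> {0..<int N}"
  shows "card (base_orbit x E) \<le> Suc (3 * N) ^ card displacements"
proof -
  have "base_orbit x E \<subseteq> (\<lambda>s. x + s) ` bounded_sums displacements (3 * N)"
  proof
    fix z assume "z \<in> base_orbit x E"
    then obtain h where h: "h \<in> supported E" and z: "z = base h x"
      unfolding base_orbit_def by blast
    have "h \<in> supported {0..<int N}"
      using supported_mono[OF assms] h by blast
    then have "z - x \<in> bounded_sums displacements (3 * N)"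
      unfolding z by (rule base_displacement_in_bounded_sums)
    then show "z \<in> (\<lambda>s. x + s) ` bounded_sums displacements (3 * N)"
      by (rule rev_image_eqI) simp
  qed
  then have "card (base_orbit x E) \<le> card ((\<lambda>s. x + s) ` bounded_sums displacements (3 * N))"
    by (intro card_mono finite_imageI finite_bounded_sums finite_displacements)
  also have "\<dots> \<le> card (bounded_sums displacements (3 * N))"
    by (rule card_image_le[OF finite_bounded_sums[OF finite_displacements]])
  also have "\<dots> \<le> Suc (3 * N) ^ card displacements"
    by (rule card_bounded_sums_le[OF finite_displacements])
  finally show ?thesis .
qed

lemma commutator_moves_interval:
  assumes a: "a \<in> carrier F" and b: "b \<in> carrier F" and "a \<otimes> b \<noteq> b \<otimes> a"
  shows "\<exists>p q. 0 \<le> p \<and> p < q \<and> q \<le> 1 \<and> (\<forall>y\<in>{p<..<q}.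
    base (single 0 a) (base (single 0 b) y) \<noteq> base (single 0 b) (base (single 0 a) y))"
proof -
  define w where "w = inv (b \<otimes> a) \<otimes> (a \<otimes> b)"
  have w: "w \<in> carrier F"
    using a b by (simp add: w_def)
  have "w \<noteq> \<one>"
    using inv_solve_left'[of "\<one>" "b \<otimes> a" "a \<otimes> b"] a b \<open>a \<otimes> b \<noteq> b \<otimes> a\<close>
    by (simp add: w_def)
  then obtain p q where pq: "0 \<le> p" "p < q" "q \<le> 1"
    and moves: "\<And>y. y \<in> {p<..<q} \<Longrightarrow> base (single 0 w) y \<noteq> y"
    using iet_map_moves_interval[OF iet_map_base[OF single_in_carrier[OF w]] base_single_neq_id[OF w]]
    by blast
  have "base (single 0 a) (base (single 0 b) y) \<noteq> base (single 0 b) (base (single 0 a) y)"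
    if y: "y \<in> {p<..<q}" for y
  proof
    assume "base (single 0 a) (base (single 0 b) y) = base (single 0 b) (base (single 0 a) y)"
    then have "base (single 0 (a \<otimes> b)) y = base (single 0 (b \<otimes> a)) y"
      using a b by (simp add: base_single_mult)
    then have "base (single 0 w) y = base (single 0 (inv (b \<otimes> a))) (base (single 0 (b \<otimes> a)) y)"
      using base_single_mult[of "inv (b \<otimes> a)" "a \<otimes> b" 0 y] a b by (simp add: w_def)
    also have "\<dots> = base (single 0 (inv (b \<otimes> a) \<otimes> (b \<otimes> a))) y"
      using a b by (simp add: base_single_mult)
    also have "\<dots> = y"
      using a b by (simp add: single_def base_one)
    finally show False
      using moves[OF y] by blast
  qed
  then show ?thesis
    using pq by blast
qed

lemma base_singles_commute_at_shift_iff: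
  assumes "a \<in> carrier F" and "b \<in> carrier F"
  shows "base (single m a) (base (single m b) x) = base (single m b) (base (single m a) x) \<longleftrightarrow>
    base (single 0 a) (base (single 0 b) (shift (- m) x)) = base (single 0 b) (base (single 0 a) (shift (- m) x))"
proof -
  have "inj (shift m)"
    using iet_map_inj[OF iet_map_shift] .
  then show ?thesis
    unfolding base_single_shift[OF assms(1), of m] base_single_shift[OF assms(2), of m]
    by (simp add: shift_inverse inj_eq)
qed

lemma comm_group_F: "comm_group F"
proof (rule group_comm_groupI)
  fix a b assume a: "a \<in> carrier F" and b: "b \<in> carrier F"
  show "a \<otimes> b = b \<otimes> a"
  proof (rule ccontr)
    assume "a \<otimes> b \<noteq> b \<otimes> a"
    then obtain p q where pq: "0 \<le> p" "p < q" "q \<le> 1"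
      and noncommuting: "\<And>y. y \<in> {p<..<q} \<Longrightarrow>
        base (single 0 a) (base (single 0 b) y) \<noteq> base (single 0 b) (base (single 0 a) y)"
      using commutator_moves_interval[OF a b] by blast
    obtain j N where jN: "real (j\<^sup>2) < real N * (q - p)"
      and poly_less: "Suc (3 * N) ^ card displacements < 2 ^ j"
      using ex_square_less_and_poly_less_two_pow[of "q - p" 3 "card displacements"] pq by auto
    obtain x where x: "j\<^sup>2 < card {n. n < N \<and> shift (- int n) x \<in> {p<..<q}}"
      using iet_maps_often_in_interval[of "\<lambda>n. shift (- int n)", OF iet_map_shift pq jN] by blast
    define G where "G = int ` {n. n < N \<and> shift (- int n) x \<in> {p<..<q}}"
    have "card G = card {n. n < N \<and> shift (- int n) x \<in> {p<..<q}}"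
      unfolding G_def by (intro card_image) (simp add: inj_on_def)
    moreover have "G \<subseteq> {0..<int N}"
      by (auto simp: G_def)
    moreover have "base (single m a) (base (single m b) x) \<noteq> base (single m b) (base (single m a) x)"
      if "m \<in> G" for m
      using that noncommuting base_singles_commute_at_shift_iff[OF a b] by (auto simp: G_def)
    ultimately have "2 ^ j \<le> card (base_orbit x G)"
      using x by (intro two_pow_le_card_base_orbit[OF a b, of G]) (auto simp: G_def)
    also have "\<dots> \<le> Suc (3 * N) ^ card displacements"
      using \<open>G \<subseteq> {0..<int N}\<close> by (rule card_base_orbit_le)
    finally show False
      using poly_less by simp
  qed
qed

end

theorem mainTheorem3:
  fixes F :: "('a, 'b) monoid_scheme"
  assumes "group F" and "finite (carrier F)" and "\<not> comm_group F"
  shows "\<not> (\<exists>\<phi>. \<phi> \<in> hom (wreath_Z F) IET \<and> inj_on \<phi> (carrier (wreath_Z F)))"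
proof
  assume "\<exists>\<phi>. \<phi> \<in> hom (wreath_Z F) IET \<and> inj_on \<phi> (carrier (wreath_Z F))"
  then obtain \<phi> where "wreath_Z_into_IET F \<phi>"
    using assms(1,2) by (auto simp: wreath_Z_into_IET_def wreath_Z_into_IET_axioms_def)
  then show False
    using wreath_Z_into_IET.comm_group_F assms(3) by blast
qed

end
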